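(* Let $c,N,n,n_1,n_2\in\mathbb{R}$, $D=\{\vec\gamma\in\mathbb{R}^3:\gamma_1^2+\gamma_2^2>0\}$, $\rho=\sqrt{\gamma_1^2+\gamma_2^2}$, and define $\vec\mu$ on $D$ by $$\mu_1=c\Big(-n\gamma_1-n_1\gamma_1^2+2n_1\gamma_2^2+n_1\gamma_3^2-3n_2\gamma_1\gamma_2+\frac{N\gamma_1}{\rho^{3}}\Big),\quad \mu_2=c\Big(-n\gamma_2+2n_2\gamma_1^2-n_2\gamma_2^2+n_2\gamma_3^2-3n_1\gamma_1\gamma_2+\frac{N\gamma_2}{\rho^{3}}\Big),$$ $$\mu_3=-c\gamma_3\Big(3n+5n_1\gamma_1+5n_2\gamma_2+\frac{N\gamma_3}{\rho}\Big).$$ Then $\Pi_{\vec\mu}$ defines a Poisson bracket on $\mathbb{R}^3\times D$, and $$C(\vec M,\vec\gamma)=\vec M\cdot\vec\gamma+c(n+n_1\gamma_1+n_2\gamma_2)(2\gamma_1^2+2\gamma_2^2+\gamma_3^2)+\tfrac12cN\Big(\frac{\gamma_3\rho^2-2}{\rho}-|\vec\gamma|^2\arctan\frac{\gamma_3}{\rho}\Big)$$ is a Casimir function of $\Pi_{\vec\mu}$.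
   Context: Coordinates on $\mathbb{R}^6$ are $(\vec M,\vec\gamma)=(M_1,M_2,M_3,\gamma_1,\gamma_2,\gamma_3)$. For a smooth $\vec\mu=(\mu_1,\mu_2,\mu_3)$ of $(\vec M,\vec\gamma)$, $\Pi_{\vec\mu}$ is the skew-symmetric $6\times6$ matrix $$\Pi_{\vec\mu}=\begin{bmatrix}0&-M_3-\mu_3&M_2+\mu_2&0&-\gamma_3&\gamma_2\\ M_3+\mu_3&0&-M_1-\mu_1&\gamma_3&0&-\gamma_1\\ -M_2-\mu_2&M_1+\mu_1&0&-\gamma_2&\gamma_1&0\\ 0&-\gamma_3&\gamma_2&0&0&0\\ \gamma_3&0&-\gamma_1&0&0&0\\ -\gamma_2&\gamma_1&0&0&0&0\end{bmatrix},$$ it "defines a Poisson bracket" if $\{f,g\}_{\vec\mu}=(\nabla f)^T\Pi_{\vec\mu}\nabla g$ satisfies the Jacobi identity, and a Casimir function is a smooth $C$ with $\Pi_{\vec\mu}\nabla C=0$. *)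

theory Defs
  imports "HOL-Analysis.Analysis"
begin

text \<open>Points of R^6 are vectors of type real^6; coordinate k (k = 0..5) is
  (M1,M2,M3,gamma1,gamma2,gamma3) in that order.\<close>

definition coord :: "nat \<Rightarrow> real^6 \<Rightarrow> real" where
  "coord k x = x $ (of_nat k :: 6)"

definition basis6 :: "nat \<Rightarrow> real^6" where
  "basis6 k = axis (of_nat k :: 6) 1"

definition partial :: "nat \<Rightarrow> (real^6 \<Rightarrow> real) \<Rightarrow> real^6 \<Rightarrow> real" where
  "partial k f x = deriv (\<lambda>t. f (x + t *\<^sub>R basis6 k)) 0"

fun iter_partial :: "nat list \<Rightarrow> (real^6 \<Rightarrow> real) \<Rightarrow> real^6 \<Rightarrow> real" where
  "iter_partial [] f = f"
| "iter_partial (k # ks) f = partial k (iter_partial ks f)"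

definition smooth_on6 :: "(real^6) set \<Rightarrow> (real^6 \<Rightarrow> real) \<Rightarrow> bool" where
  "smooth_on6 U f \<longleftrightarrow> (\<forall>ks. (\<forall>k\<in>set ks. k < 6) \<longrightarrow> iter_partial ks f differentiable_on U)"

definition grad6 :: "(real^6 \<Rightarrow> real) \<Rightarrow> real^6 \<Rightarrow> nat \<Rightarrow> real" where
  "grad6 f x k = partial k f x"

definition PiMat :: "(real^6 \<Rightarrow> real) \<Rightarrow> (real^6 \<Rightarrow> real) \<Rightarrow> (real^6 \<Rightarrow> real)
    \<Rightarrow> real^6 \<Rightarrow> nat \<Rightarrow> nat \<Rightarrow> real" where
  "PiMat mu1 mu2 mu3 x i j =
    (let M1 = coord 0 x; M2 = coord 1 x; M3 = coord 2 x;
         g1 = coord 3 x; g2 = coord 4 x; g3 = coord 5 x;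
         m1 = mu1 x; m2 = mu2 x; m3 = mu3 x in
     [[0, -M3-m3, M2+m2, 0, -g3, g2],
      [M3+m3, 0, -M1-m1, g3, 0, -g1],
      [-M2-m2, M1+m1, 0, -g2, g1, 0],
      [0, -g3, g2, 0, 0, 0],
      [g3, 0, -g1, 0, 0, 0],
      [-g2, g1, 0, 0, 0, 0]] ! i ! j)"

definition bracket :: "(real^6 \<Rightarrow> real) \<Rightarrow> (real^6 \<Rightarrow> real) \<Rightarrow> (real^6 \<Rightarrow> real)
    \<Rightarrow> (real^6 \<Rightarrow> real) \<Rightarrow> (real^6 \<Rightarrow> real) \<Rightarrow> real^6 \<Rightarrow> real" where
  "bracket mu1 mu2 mu3 f g x =
     (\<Sum>i<6. \<Sum>j<6. grad6 f x i * PiMat mu1 mu2 mu3 x i j * grad6 g x j)"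

definition defines_poisson_on :: "(real^6) set \<Rightarrow> (real^6 \<Rightarrow> real) \<Rightarrow> (real^6 \<Rightarrow> real)
    \<Rightarrow> (real^6 \<Rightarrow> real) \<Rightarrow> bool" where
  "defines_poisson_on U mu1 mu2 mu3 \<longleftrightarrow>
     (\<forall>f g h. smooth_on6 U f \<and> smooth_on6 U g \<and> smooth_on6 U h \<longrightarrow>
        (\<forall>x\<in>U. bracket mu1 mu2 mu3 f (bracket mu1 mu2 mu3 g h) x
              + bracket mu1 mu2 mu3 g (bracket mu1 mu2 mu3 h f) x
              + bracket mu1 mu2 mu3 h (bracket mu1 mu2 mu3 f g) x = 0))"

definition is_casimir_on :: "(real^6) set \<Rightarrow> (real^6 \<Rightarrow> real) \<Rightarrow> (real^6 \<Rightarrow> real)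
    \<Rightarrow> (real^6 \<Rightarrow> real) \<Rightarrow> (real^6 \<Rightarrow> real) \<Rightarrow> bool" where
  "is_casimir_on U mu1 mu2 mu3 C \<longleftrightarrow> smooth_on6 U C \<and>
     (\<forall>x\<in>U. \<forall>i<6. (\<Sum>j<6. PiMat mu1 mu2 mu3 x i j * grad6 C x j) = 0)"

definition domR3D :: "(real^6) set" where
  "domR3D = {x. (coord 3 x)\<^sup>2 + (coord 4 x)\<^sup>2 > 0}"

end

theory Submission
  imports Defs
begin

text \<open>For \<open>{f, g} = \<nabla>f\<^sup>T \<Pi> \<nabla>g\<close> with smooth \<open>f, g, h\<close>, the second derivatives in the Jacobi
  sum cancel in pairs because Hessians are symmetric (Schwarz), so the Jacobi identity reduces to the
  vanishing of the Schouten bracket \<open>[\<Pi>, \<Pi>]\<close>, a cyclic sum of terms \<open>\<Pi>\<^sub>i\<^sub>j \<partial>\<^sub>j \<Pi>\<^sub>k\<^sub>l\<close>.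
  For \<open>\<Pi>\<^sub>\<mu>\<close> with \<open>\<mu>\<close> depending on \<open>\<gamma>\<close> only, all these sums are multiples of
  \<open>\<gamma> \<cdot> curl \<mu>\<close>, and this vanishes for the given \<open>\<mu>\<close>.

  The function \<open>C\<close> has \<open>\<nabla>\<^sub>M C = \<gamma>\<close> and \<open>\<nabla>\<^sub>\<gamma> C = M + \<mu> + \<lambda> \<gamma>\<close> with
  \<open>\<lambda> = c (5 n + 7 n\<^sub>1 \<gamma>\<^sub>1 + 7 n\<^sub>2 \<gamma>\<^sub>2) + c N (\<gamma>\<^sub>3/\<rho> - arctan (\<gamma>\<^sub>3/\<rho>))\<close>.
  Since \<open>\<Pi>\<^sub>\<mu> \<nabla>C = ((M + \<mu>) \<times> \<nabla>\<^sub>M C + \<gamma> \<times> \<nabla>\<^sub>\<gamma> C, \<gamma> \<times> \<nabla>\<^sub>M C)\<close>, it vanishes.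
  Smoothness holds because \<open>C\<close> is built from coordinates, \<open>1/\<rho>\<close>, \<open>1/|\<gamma>|\<^sup>2\<close> and
  \<open>arctan (\<gamma>\<^sub>3/\<rho>)\<close>, a class closed under partial differentiation on \<open>\<rho> > 0\<close>.\<close>

section \<open>Coordinates and partial derivatives\<close>

lemma of_nat_6_eq_iff: "j < 6 \<Longrightarrow> k < 6 \<Longrightarrow> ((of_nat j :: 6) = of_nat k) = (j = k)"
  by (auto simp: less_Suc_eq numeral_eq_Suc)

lemma coord_basis6: "j < 6 \<Longrightarrow> k < 6 \<Longrightarrow> coord j (basis6 k) = (if j = k then 1 else 0)"
  unfolding coord_def basis6_def axis_def using of_nat_6_eq_iff by auto

lemma coord_has_derivative [derivative_intros]:
  "((\<lambda>x. coord j x) has_derivative (\<lambda>h. coord j h)) F"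
  unfolding coord_def by (rule bounded_linear_imp_has_derivative) (rule bounded_linear_vec_nth)

lemma less_6_cases: "(k::nat) < 6 \<Longrightarrow> k = 0 \<or> k = 1 \<or> k = 2 \<or> k = 3 \<or> k = 4 \<or> k = 5"
  by auto

lemma sum_lessThan_6: "(\<Sum>j<(6::nat). f j) = f 0 + f 1 + f 2 + f 3 + f 4 + (f 5 :: real)"
  by (simp add: eval_nat_numeral)

lemma has_real_derivative_along_line:
  fixes f :: "'a::real_normed_vector \<Rightarrow> real"
  assumes "(f has_derivative f') (at x)"
  shows "((\<lambda>t. f (x + t *\<^sub>R b)) has_real_derivative f' b) (at 0)"
proof -
  have "((\<lambda>t. f (x + t *\<^sub>R b)) has_derivative (\<lambda>t. f' (t *\<^sub>R b))) (at 0)"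
    by (rule has_derivative_compose[where f="\<lambda>t. x + t *\<^sub>R b", simplified])
       (auto intro!: derivative_eq_intros assms)
  moreover have "linear f'"
    using assms has_derivative_linear by blast
  then have "(\<lambda>t. f' (t *\<^sub>R b)) = (*) (f' b)"
    by (auto simp: linear_scale)
  ultimately show ?thesis by (simp add: has_field_derivative_def)
qed

lemma partial_eq_derivative:
  assumes "(f has_derivative f') (at x)"
  shows "partial k f x = f' (basis6 k)"
  unfolding partial_def using has_real_derivative_along_line[OF assms] by (rule DERIV_imp_deriv)

lemma has_real_derivative_partial:
  assumes "f differentiable (at x)"
  shows "((\<lambda>t. f (x + t *\<^sub>R basis6 k)) has_real_derivative partial k f x) (at 0)"
proof -
  obtain f' where "(f has_derivative f') (at x)"
    using assms unfolding differentiable_def by blast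
  then show ?thesis
    using has_real_derivative_along_line partial_eq_derivative by metis
qed

lemma partial_cong_open:
  assumes "open U" "x \<in> U" "\<And>y. y \<in> U \<Longrightarrow> f y = g y"
  shows "partial k f x = partial k g x"
proof -
  have "open ((\<lambda>t::real. x + t *\<^sub>R basis6 k) -` U)"
    by (rule open_vimage[OF assms(1)]) (intro continuous_intros)
  then have "eventually (\<lambda>t. x + t *\<^sub>R basis6 k \<in> U) (nhds 0)"
    using eventually_nhds_in_open assms(2) by fastforce
  then have "eventually (\<lambda>t. f (x + t *\<^sub>R basis6 k) = g (x + t *\<^sub>R basis6 k)) (nhds 0)"
    by eventually_elim (simp add: assms(3))
  then show ?thesis unfolding partial_def by (rule deriv_cong_ev) simp
qed

lemma partial_const: "partial k (\<lambda>y. a) x = 0"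
  using partial_eq_derivative[OF has_derivative_const] by simp

lemma partial_coord: "j < 6 \<Longrightarrow> k < 6 \<Longrightarrow> partial k (\<lambda>y. coord j y) x = (if j = k then 1 else 0)"
  using partial_eq_derivative[OF coord_has_derivative] coord_basis6 by simp

lemma partial_add:
  assumes "f differentiable (at x)" "g differentiable (at x)"
  shows "partial k (\<lambda>y. f y + g y) x = partial k f x + partial k g x"
  using assms partial_eq_derivative[OF has_derivative_add] partial_eq_derivative
  unfolding differentiable_def by metis

lemma partial_diff:
  assumes "f differentiable (at x)" "g differentiable (at x)"
  shows "partial k (\<lambda>y. f y - g y) x = partial k f x - partial k g x"
  using assms partial_eq_derivative[OF has_derivative_diff] partial_eq_derivative
  unfolding differentiable_def by metis

lemma partial_minus:
  assumes "f differentiable (at x)"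
  shows "partial k (\<lambda>y. - f y) x = - partial k f x"
  using partial_diff[OF differentiable_const assms, of k 0] partial_const by simp

lemma partial_mult:
  assumes "f differentiable (at x)" "g differentiable (at x)"
  shows "partial k (\<lambda>y. f y * g y) x = f x * partial k g x + partial k f x * g x"
proof -
  obtain f' g' where f: "(f has_derivative f') (at x)" and g: "(g has_derivative g') (at x)"
    using assms unfolding differentiable_def by blast
  show ?thesis
    using partial_eq_derivative[OF has_derivative_mult[OF f g]]
      partial_eq_derivative[OF f] partial_eq_derivative[OF g] by simp
qed

lemma partial_sum:
  assumes "finite A" "\<And>i. i \<in> A \<Longrightarrow> F i differentiable (at x)"
  shows "partial k (\<lambda>y. \<Sum>i\<in>A. F i y) x = (\<Sum>i\<in>A. partial k (F i) x)"
  using assms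
proof (induction A rule: finite_induct)
  case empty
  then show ?case by (simp add: partial_const)
next
  case (insert a A)
  then show ?case by (simp add: partial_add)
qed

section \<open>Symmetry of mixed partial derivatives\<close>

lemma has_real_derivative_along_line_at:
  fixes F D :: "'a::real_normed_vector \<Rightarrow> real"
  assumes "\<forall>y\<in>U. ((\<lambda>t. F (y + t *\<^sub>R b)) has_real_derivative D y) (at 0)"
    and "y0 + s *\<^sub>R b \<in> U"
  shows "((\<lambda>s. F (y0 + s *\<^sub>R b)) has_real_derivative D (y0 + s *\<^sub>R b)) (at s)"
proof -
  have "((\<lambda>t. F ((y0 + s *\<^sub>R b) + t *\<^sub>R b)) has_real_derivative D (y0 + s *\<^sub>R b)) (at 0)"
    using assms by blast
  moreover have "(\<lambda>t. F ((y0 + s *\<^sub>R b) + t *\<^sub>R b)) = (\<lambda>t. F (y0 + (t + s) *\<^sub>R b))"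
    by (rule ext) (simp add: scaleR_add_left algebra_simps)
  ultimately have "((\<lambda>t. F (y0 + (t + s) *\<^sub>R b)) has_real_derivative D (y0 + s *\<^sub>R b)) (at 0)"
    by metis
  then show ?thesis using DERIV_shift[of "\<lambda>s. F (y0 + s *\<^sub>R b)" _ 0 s] by (simp only: add_0_left)
qed

lemma second_difference_mean_value:
  fixes g G1 G12 :: "'a::real_normed_vector \<Rightarrow> real"
  assumes d1: "\<forall>y\<in>U. ((\<lambda>t. g (y + t *\<^sub>R b1)) has_real_derivative G1 y) (at 0)"
    and d12: "\<forall>y\<in>U. ((\<lambda>t. G1 (y + t *\<^sub>R b2)) has_real_derivative G12 y) (at 0)"
    and h: "h > 0"
    and inU: "\<And>s t. 0 \<le> s \<Longrightarrow> s \<le> h \<Longrightarrow> 0 \<le> t \<Longrightarrow> t \<le> h \<Longrightarrow> (x + t *\<^sub>R b2) + s *\<^sub>R b1 \<in> U"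
  shows "\<exists>s t. 0 < s \<and> s < h \<and> 0 < t \<and> t < h \<and>
    g ((x + h *\<^sub>R b2) + h *\<^sub>R b1) - g (x + h *\<^sub>R b1) - g (x + h *\<^sub>R b2) + g x
      = h * h * G12 ((x + s *\<^sub>R b1) + t *\<^sub>R b2)"
proof -
  define \<phi> where "\<phi> s = g ((x + h *\<^sub>R b2) + s *\<^sub>R b1) - g (x + s *\<^sub>R b1)" for s
  have "DERIV \<phi> s :> G1 ((x + h *\<^sub>R b2) + s *\<^sub>R b1) - G1 (x + s *\<^sub>R b1)" if "0 \<le> s" "s \<le> h" for s
    unfolding \<phi>_def using inU[of s h] inU[of s 0] that h
    by (intro DERIV_diff has_real_derivative_along_line_at[OF d1]) simp_all
  then have "\<exists>z. 0 < z \<and> z < h \<and> \<phi> h - \<phi> 0 = (h - 0) * (G1 ((x + h *\<^sub>R b2) + z *\<^sub>R b1) - G1 (x + z *\<^sub>R b1))"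
    by (intro MVT2[OF h])
  then obtain s where s: "0 < s" "s < h"
    "\<phi> h - \<phi> 0 = (h - 0) * (G1 ((x + h *\<^sub>R b2) + s *\<^sub>R b1) - G1 (x + s *\<^sub>R b1))"
    by blast
  have "DERIV (\<lambda>t. G1 ((x + s *\<^sub>R b1) + t *\<^sub>R b2)) t :> G12 ((x + s *\<^sub>R b1) + t *\<^sub>R b2)"
    if "0 \<le> t" "t \<le> h" for t
    using inU[of s t] that s by (intro has_real_derivative_along_line_at[OF d12]) (simp add: add_ac)
  then have "\<exists>z. 0 < z \<and> z < h \<and> G1 ((x + s *\<^sub>R b1) + h *\<^sub>R b2) - G1 ((x + s *\<^sub>R b1) + 0 *\<^sub>R b2) = (h - 0) * G12 ((x + s *\<^sub>R b1) + z *\<^sub>R b2)"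
    by (intro MVT2[OF h])
  then obtain t where t: "0 < t" "t < h"
    "G1 ((x + s *\<^sub>R b1) + h *\<^sub>R b2) - G1 ((x + s *\<^sub>R b1) + 0 *\<^sub>R b2) = (h - 0) * G12 ((x + s *\<^sub>R b1) + t *\<^sub>R b2)"
    by blast
  have "g ((x + h *\<^sub>R b2) + h *\<^sub>R b1) - g (x + h *\<^sub>R b1) - g (x + h *\<^sub>R b2) + g x = \<phi> h - \<phi> 0"
    by (simp add: \<phi>_def)
  also have "\<dots> = h * h * G12 ((x + s *\<^sub>R b1) + t *\<^sub>R b2)"
    using s(3) t(3) by (simp add: add_ac)
  finally show ?thesis using s t by blast
qed

lemma small_parallelogram:
  fixes x b1 b2 :: "'a::real_normed_vector"
  assumes "open U" "x \<in> U" "m > 0"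
  obtains h where "h > 0" and "\<And>s t. 0 \<le> s \<Longrightarrow> s \<le> h \<Longrightarrow> 0 \<le> t \<Longrightarrow> t \<le> h \<Longrightarrow>
    x + s *\<^sub>R b1 + t *\<^sub>R b2 \<in> U \<and> dist (x + s *\<^sub>R b1 + t *\<^sub>R b2) x < m"
proof -
  obtain e where e: "e > 0" "ball x e \<subseteq> U" using assms(1,2) open_contains_ball by blast
  define r where "r = min e m"
  define B where "B = norm b1 + norm b2 + 1"
  define h where "h = r / (2 * B)"
  have r: "r > 0" and B: "B > 0" using e assms(3) by (simp_all add: r_def B_def add_nonneg_pos)
  then have h: "h > 0" and hB: "h * B < r" by (simp_all add: h_def field_simps)
  have close: "dist (x + s *\<^sub>R b1 + t *\<^sub>R b2) x < r" if "0 \<le> s" "s \<le> h" "0 \<le> t" "t \<le> h" for s t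
  proof -
    have "dist (x + s *\<^sub>R b1 + t *\<^sub>R b2) x = norm (s *\<^sub>R b1 + t *\<^sub>R b2)"
      by (simp add: dist_norm)
    also have "\<dots> \<le> s * norm b1 + t * norm b2"
      using that by (metis (no_types) abs_of_nonneg norm_scaleR norm_triangle_ineq)
    also have "\<dots> \<le> h * norm b1 + h * norm b2"
      using that by (intro add_mono mult_right_mono) auto
    also have "\<dots> < r" using hB h by (simp add: B_def algebra_simps)
    finally show ?thesis .
  qed
  show ?thesis
  proof (rule that[OF h])
    fix s t assume "0 \<le> s" "s \<le> h" "0 \<le> t" "t \<le> h"
    then have "dist (x + s *\<^sub>R b1 + t *\<^sub>R b2) x < r" by (rule close)
    then show "x + s *\<^sub>R b1 + t *\<^sub>R b2 \<in> U \<and> dist (x + s *\<^sub>R b1 + t *\<^sub>R b2) x < m"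
      using e(2) by (auto simp: r_def dist_commute)
  qed
qed

text \<open>Schwarz's theorem for the directional derivatives along two fixed vectors: both mixed
  derivatives equal the limit of the same second difference quotient.\<close>

lemma directional_derivatives_commute:
  fixes g G1 G2 G12 G21 :: "'a::real_normed_vector \<Rightarrow> real"
  assumes U: "open U" "x \<in> U"
    and d1: "\<forall>y\<in>U. ((\<lambda>t. g (y + t *\<^sub>R b1)) has_real_derivative G1 y) (at 0)"
    and d2: "\<forall>y\<in>U. ((\<lambda>t. g (y + t *\<^sub>R b2)) has_real_derivative G2 y) (at 0)"
    and d12: "\<forall>y\<in>U. ((\<lambda>t. G1 (y + t *\<^sub>R b2)) has_real_derivative G12 y) (at 0)"
    and d21: "\<forall>y\<in>U. ((\<lambda>t. G2 (y + t *\<^sub>R b1)) has_real_derivative G21 y) (at 0)"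
    and c12: "isCont G12 x" and c21: "isCont G21 x"
  shows "G12 x = G21 x"
proof (rule ccontr)
  assume "G12 x \<noteq> G21 x"
  define \<epsilon> where "\<epsilon> = \<bar>G12 x - G21 x\<bar> / 2"
  have "\<epsilon> > 0" using \<open>G12 x \<noteq> G21 x\<close> by (simp add: \<epsilon>_def)
  then obtain \<delta>1 \<delta>2 where \<delta>: "\<delta>1 > 0" "\<delta>2 > 0"
    and cont1: "\<And>y. dist y x < \<delta>1 \<Longrightarrow> dist (G12 y) (G12 x) < \<epsilon>"
    and cont2: "\<And>y. dist y x < \<delta>2 \<Longrightarrow> dist (G21 y) (G21 x) < \<epsilon>"
    using c12 c21 unfolding continuous_at_eps_delta by metis
  then obtain h where h: "h > 0" and near: "\<And>s t. 0 \<le> s \<Longrightarrow> s \<le> h \<Longrightarrow> 0 \<le> t \<Longrightarrow> t \<le> h \<Longrightarrow>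
      x + s *\<^sub>R b1 + t *\<^sub>R b2 \<in> U \<and> dist (x + s *\<^sub>R b1 + t *\<^sub>R b2) x < min \<delta>1 \<delta>2"
    using small_parallelogram[OF U, of "min \<delta>1 \<delta>2" b1 b2] by auto
  have inU1: "(x + t *\<^sub>R b2) + s *\<^sub>R b1 \<in> U" if "0 \<le> s" "s \<le> h" "0 \<le> t" "t \<le> h" for s t
    using near[OF that] by (auto simp: add_ac)
  have inU2: "(x + t *\<^sub>R b1) + s *\<^sub>R b2 \<in> U" if "0 \<le> s" "s \<le> h" "0 \<le> t" "t \<le> h" for s t
    using near[OF that(3,4,1,2)] by (auto simp: add_ac)
  obtain s t where st: "0 < s" "s < h" "0 < t" "t < h"
    "g ((x + h *\<^sub>R b2) + h *\<^sub>R b1) - g (x + h *\<^sub>R b1) - g (x + h *\<^sub>R b2) + g x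
      = h * h * G12 ((x + s *\<^sub>R b1) + t *\<^sub>R b2)"
    using second_difference_mean_value[OF d1 d12 h inU1] by blast
  obtain s' t' where st': "0 < s'" "s' < h" "0 < t'" "t' < h"
    "g ((x + h *\<^sub>R b1) + h *\<^sub>R b2) - g (x + h *\<^sub>R b2) - g (x + h *\<^sub>R b1) + g x
      = h * h * G21 ((x + s' *\<^sub>R b2) + t' *\<^sub>R b1)"
    using second_difference_mean_value[OF d2 d21 h inU2] by blast
  have swap: "x + h *\<^sub>R b2 + h *\<^sub>R b1 = x + h *\<^sub>R b1 + h *\<^sub>R b2" by (simp add: algebra_simps)
  have "h * h * G12 (x + s *\<^sub>R b1 + t *\<^sub>R b2) = h * h * G21 (x + s' *\<^sub>R b2 + t' *\<^sub>R b1)"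
    using st(5) st'(5) unfolding swap by linarith
  moreover have "x + s' *\<^sub>R b2 + t' *\<^sub>R b1 = x + t' *\<^sub>R b1 + s' *\<^sub>R b2" by (simp add: algebra_simps)
  ultimately have eq: "G12 (x + s *\<^sub>R b1 + t *\<^sub>R b2) = G21 (x + t' *\<^sub>R b1 + s' *\<^sub>R b2)"
    using h by simp
  have "dist (G12 (x + s *\<^sub>R b1 + t *\<^sub>R b2)) (G12 x) < \<epsilon>"
    using near[of s t] st cont1 by simp
  moreover have "dist (G21 (x + t' *\<^sub>R b1 + s' *\<^sub>R b2)) (G21 x) < \<epsilon>"
    using near[of t' s'] st' cont2 by simp
  ultimately have "\<bar>G12 x - G21 x\<bar> < 2 * \<epsilon>" using eq by (simp add: dist_real_def)
  then show False by (simp add: \<epsilon>_def)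
qed

lemma iter_partial_snoc: "iter_partial (ks @ [k]) f = iter_partial ks (partial k f)"
  by (induction ks) auto

lemma smooth_on6_partial: "smooth_on6 U f \<Longrightarrow> k < 6 \<Longrightarrow> smooth_on6 U (partial k f)"
  unfolding smooth_on6_def
proof (intro allI impI)
  fix ks :: "nat list"
  assume "\<forall>ks. (\<forall>k\<in>set ks. k < 6) \<longrightarrow> iter_partial ks f differentiable_on U"
    and "k < 6" "\<forall>k\<in>set ks. k < 6"
  then have "iter_partial (ks @ [k]) f differentiable_on U" by auto
  then show "iter_partial ks (partial k f) differentiable_on U" by (simp add: iter_partial_snoc)
qed

lemma smooth_on6_imp_differentiable:
  "open U \<Longrightarrow> smooth_on6 U f \<Longrightarrow> x \<in> U \<Longrightarrow> f differentiable (at x)"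
  unfolding smooth_on6_def
  using differentiable_on_eq_differentiable_at[of U f]
  by (metis empty_iff empty_set iter_partial.simps(1))

lemma partial_partial_commute:
  assumes U: "open U" and g: "smooth_on6 U g" and x: "x \<in> U" and j: "j < 6" and k: "k < 6"
  shows "partial j (partial k g) x = partial k (partial j g) x"
proof -
  have diff: "\<And>f y. smooth_on6 U f \<Longrightarrow> y \<in> U \<Longrightarrow> f differentiable (at y)"
    using smooth_on6_imp_differentiable[OF U] .
  have gk: "smooth_on6 U (partial k g)" and gj: "smooth_on6 U (partial j g)"
    using smooth_on6_partial g j k by auto
  show ?thesis
  proof (rule directional_derivatives_commute[OF U x])
    show "\<forall>y\<in>U. ((\<lambda>t. g (y + t *\<^sub>R basis6 k)) has_real_derivative partial k g y) (at 0)"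
      using diff[OF g] has_real_derivative_partial by blast
    show "\<forall>y\<in>U. ((\<lambda>t. g (y + t *\<^sub>R basis6 j)) has_real_derivative partial j g y) (at 0)"
      using diff[OF g] has_real_derivative_partial by blast
    show "\<forall>y\<in>U. ((\<lambda>t. partial k g (y + t *\<^sub>R basis6 j)) has_real_derivative partial j (partial k g) y) (at 0)"
      using diff[OF gk] has_real_derivative_partial by blast
    show "\<forall>y\<in>U. ((\<lambda>t. partial j g (y + t *\<^sub>R basis6 k)) has_real_derivative partial k (partial j g) y) (at 0)"
      using diff[OF gj] has_real_derivative_partial by blast
    show "isCont (partial j (partial k g)) x"
      using diff[OF smooth_on6_partial[OF gk j] x] differentiable_imp_continuous_within by blast
    show "isCont (partial k (partial j g)) x"
      using diff[OF smooth_on6_partial[OF gj k] x] differentiable_imp_continuous_within by blast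
  qed
qed

section \<open>The Jacobi identity for a skew-symmetric matrix\<close>

lemma sum_rotate3:
  "(\<Sum>a\<in>I. \<Sum>b\<in>I. \<Sum>c\<in>I. X a b c) = (\<Sum>c\<in>I. \<Sum>a\<in>I. \<Sum>b\<in>I. X a b c :: real)"
proof -
  have "(\<Sum>a\<in>I. \<Sum>b\<in>I. \<Sum>c\<in>I. X a b c) = (\<Sum>a\<in>I. \<Sum>c\<in>I. \<Sum>b\<in>I. X a b c)"
    by (rule sum.cong[OF refl]) (rule sum.swap)
  also have "\<dots> = (\<Sum>c\<in>I. \<Sum>a\<in>I. \<Sum>b\<in>I. X a b c)" by (rule sum.swap)
  finally show ?thesis .
qed

definition bilinear_sum :: "'i set \<Rightarrow> ('i \<Rightarrow> 'i \<Rightarrow> real) \<Rightarrow> ('i \<Rightarrow> real) \<Rightarrow> ('i \<Rightarrow> real) \<Rightarrow> real"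
  where "bilinear_sum I S a b = (\<Sum>j\<in>I. \<Sum>k\<in>I. a j * S j k * b k)"

definition contract :: "'i set \<Rightarrow> ('i \<Rightarrow> 'i \<Rightarrow> real) \<Rightarrow> ('i \<Rightarrow> real) \<Rightarrow> 'i \<Rightarrow> real"
  where "contract I P F j = (\<Sum>i\<in>I. F i * P i j)"

text \<open>The bracket \<open>{f,{g,h}}\<close> expanded by the product rule: \<open>F, G, H\<close> are the gradients of
  \<open>f, g, h\<close>, \<open>GG, HH\<close> the Hessians of \<open>g, h\<close>, and \<open>DP j k l\<close> stands for \<open>\<partial>\<^sub>j P\<^sub>k\<^sub>l\<close>.\<close>

definition nested_bracket_sum :: "'i set \<Rightarrow> ('i \<Rightarrow> 'i \<Rightarrow> real) \<Rightarrow> ('i \<Rightarrow> 'i \<Rightarrow> 'i \<Rightarrow> real)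
    \<Rightarrow> ('i \<Rightarrow> real) \<Rightarrow> ('i \<Rightarrow> real) \<Rightarrow> ('i \<Rightarrow> real) \<Rightarrow> ('i \<Rightarrow> 'i \<Rightarrow> real) \<Rightarrow> ('i \<Rightarrow> 'i \<Rightarrow> real) \<Rightarrow> real"
  where "nested_bracket_sum I P DP F G H GG HH = (\<Sum>i\<in>I. \<Sum>j\<in>I. F i * P i j *
     (\<Sum>k\<in>I. \<Sum>l\<in>I. GG j k * P k l * H l + G k * DP j k l * H l + G k * P k l * HH j l))"

definition schouten_sum :: "'i set \<Rightarrow> ('i \<Rightarrow> 'i \<Rightarrow> real) \<Rightarrow> ('i \<Rightarrow> 'i \<Rightarrow> 'i \<Rightarrow> real)
    \<Rightarrow> ('i \<Rightarrow> real) \<Rightarrow> ('i \<Rightarrow> real) \<Rightarrow> ('i \<Rightarrow> real) \<Rightarrow> real"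
  where "schouten_sum I P DP F G H =
    (\<Sum>a\<in>I. \<Sum>b\<in>I. \<Sum>c\<in>I. F a * G b * H c * (\<Sum>j\<in>I. P a j * DP j b c))"

lemma bilinear_sum_commute:
  assumes "\<And>i j. i \<in> I \<Longrightarrow> j \<in> I \<Longrightarrow> S i j = S j i"
  shows "bilinear_sum I S a b = bilinear_sum I S b a"
proof -
  have "bilinear_sum I S a b = (\<Sum>k\<in>I. \<Sum>j\<in>I. a j * S j k * b k)"
    unfolding bilinear_sum_def by (rule sum.swap)
  also have "\<dots> = bilinear_sum I S b a"
    unfolding bilinear_sum_def using assms by (intro sum.cong refl) (simp add: mult_ac)
  finally show ?thesis .
qed

lemma nested_bracket_sum_decompose:
  assumes skew: "\<And>i j. i \<in> I \<Longrightarrow> j \<in> I \<Longrightarrow> P i j = - P j i"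
  shows "nested_bracket_sum I P DP F G H GG HH =
    - bilinear_sum I GG (contract I P F) (contract I P H)
    + bilinear_sum I HH (contract I P F) (contract I P G) + schouten_sum I P DP F G H"
proof -
  have J: "nested_bracket_sum I P DP F G H GG HH = (\<Sum>j\<in>I. contract I P F j *
     (\<Sum>k\<in>I. \<Sum>l\<in>I. GG j k * P k l * H l + G k * DP j k l * H l + G k * P k l * HH j l))"
    unfolding nested_bracket_sum_def contract_def
    by (subst sum.swap) (simp add: sum_distrib_right mult_ac)
  have inner: "(\<Sum>k\<in>I. \<Sum>l\<in>I. GG j k * P k l * H l + G k * DP j k l * H l + G k * P k l * HH j l)
     = - (\<Sum>k\<in>I. GG j k * contract I P H k) + (\<Sum>k\<in>I. \<Sum>l\<in>I. G k * DP j k l * H l)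
       + (\<Sum>l\<in>I. contract I P G l * HH j l)" for j
  proof -
    have "(\<Sum>k\<in>I. \<Sum>l\<in>I. GG j k * P k l * H l) = - (\<Sum>k\<in>I. GG j k * contract I P H k)"
      unfolding contract_def sum_distrib_left sum_negf[symmetric]
    proof (intro sum.cong refl)
      fix k l assume "k \<in> I" "l \<in> I"
      then have "P k l = - P l k" by (rule skew)
      then show "GG j k * P k l * H l = - (GG j k * (H l * P l k))" by simp
    qed
    moreover have "(\<Sum>k\<in>I. \<Sum>l\<in>I. G k * P k l * HH j l) = (\<Sum>l\<in>I. contract I P G l * HH j l)"
      unfolding contract_def sum_distrib_right by (subst sum.swap) (simp add: mult_ac)
    ultimately show ?thesis by (simp add: sum.distrib)
  qed
  have "schouten_sum I P DP F G H
      = (\<Sum>a\<in>I. \<Sum>j\<in>I. \<Sum>b\<in>I. \<Sum>c\<in>I. F a * P a j * (G b * DP j b c * H c))"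
    unfolding schouten_sum_def
    by (rule sum.cong[OF refl], simp only: sum_distrib_left, subst sum_rotate3,
        intro sum.cong refl, simp add: mult_ac)
  also have "\<dots> = (\<Sum>j\<in>I. \<Sum>a\<in>I. \<Sum>b\<in>I. \<Sum>c\<in>I. F a * P a j * (G b * DP j b c * H c))"
    by (rule sum.swap)
  also have "\<dots> = (\<Sum>j\<in>I. contract I P F j * (\<Sum>k\<in>I. \<Sum>l\<in>I. G k * DP j k l * H l))"
    unfolding contract_def sum_distrib_right unfolding sum_distrib_left by simp
  finally have T: "schouten_sum I P DP F G H = \<dots>" .
  show ?thesis unfolding J inner T bilinear_sum_def
    by (simp add: sum_distrib_left sum_distrib_right distrib_left right_diff_distrib
        sum.distrib sum_subtractf sum_negf mult_ac)
qed

text \<open>Hypothesis \<open>schouten\<close> is the vanishing of the Schouten bracket \<open>[P, P]\<close>; the Hessian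
  terms cancel in pairs by their symmetry.\<close>

lemma jacobi_cyclic_sum_eq_0:
  assumes skew: "\<And>i j. i \<in> I \<Longrightarrow> j \<in> I \<Longrightarrow> P i j = - P j i"
    and "\<And>i j. i \<in> I \<Longrightarrow> j \<in> I \<Longrightarrow> FF i j = FF j i"
    and "\<And>i j. i \<in> I \<Longrightarrow> j \<in> I \<Longrightarrow> GG i j = GG j i"
    and "\<And>i j. i \<in> I \<Longrightarrow> j \<in> I \<Longrightarrow> HH i j = HH j i"
    and schouten: "\<And>i k l. i \<in> I \<Longrightarrow> k \<in> I \<Longrightarrow> l \<in> I \<Longrightarrow>
       (\<Sum>j\<in>I. P i j * DP j k l + P k j * DP j l i + P l j * DP j i k) = 0"
  shows "nested_bracket_sum I P DP F G H GG HH + nested_bracket_sum I P DP G H F HH FF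
       + nested_bracket_sum I P DP H F G FF GG = 0"
proof -
  have "schouten_sum I P DP G H F =
      (\<Sum>a\<in>I. \<Sum>b\<in>I. \<Sum>c\<in>I. F a * G b * H c * (\<Sum>j\<in>I. P b j * DP j c a))"
    unfolding schouten_sum_def
    by (subst sum_rotate3[of "\<lambda>a b c. G a * H b * F c * (\<Sum>j\<in>I. P a j * DP j b c)"])
       (simp add: mult_ac)
  moreover have "schouten_sum I P DP H F G =
      (\<Sum>a\<in>I. \<Sum>b\<in>I. \<Sum>c\<in>I. F a * G b * H c * (\<Sum>j\<in>I. P c j * DP j a b))"
    unfolding schouten_sum_def
    by (subst sum_rotate3[of "\<lambda>a b c. H a * F b * G c * (\<Sum>j\<in>I. P a j * DP j b c)"],
        subst sum_rotate3) (simp add: mult_ac)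
  ultimately have schouten_sum_cyclic:
      "schouten_sum I P DP F G H + schouten_sum I P DP G H F + schouten_sum I P DP H F G = 0"
    unfolding schouten_sum_def
    by (simp add: sum.distrib[symmetric] distrib_left[symmetric] schouten)
  have hessian_terms: "bilinear_sum I FF (contract I P G) (contract I P H) = bilinear_sum I FF (contract I P H) (contract I P G)"
    "bilinear_sum I GG (contract I P F) (contract I P H) = bilinear_sum I GG (contract I P H) (contract I P F)"
    "bilinear_sum I HH (contract I P F) (contract I P G) = bilinear_sum I HH (contract I P G) (contract I P F)"
    using assms(2-4) by (blast intro: bilinear_sum_commute)+
  have decompose: "nested_bracket_sum I P DP A B C BB CC =
      - bilinear_sum I BB (contract I P A) (contract I P C)
      + bilinear_sum I CC (contract I P A) (contract I P B) + schouten_sum I P DP A B C"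
    for A B C BB CC
    using skew by (rule nested_bracket_sum_decompose)
  show ?thesis
    unfolding decompose using schouten_sum_cyclic hessian_terms by linarith
qed

section \<open>The matrix \<open>\<Pi>\<^sub>\<mu>\<close> and its Schouten bracket\<close>

definition pi_table :: "real \<Rightarrow> real \<Rightarrow> real \<Rightarrow> real \<Rightarrow> real \<Rightarrow> real \<Rightarrow> real \<Rightarrow> real \<Rightarrow> real
    \<Rightarrow> nat \<Rightarrow> nat \<Rightarrow> real" where
  "pi_table M1 M2 M3 g1 g2 g3 m1 m2 m3 i j =
     [[0, -M3-m3, M2+m2, 0, -g3, g2],
      [M3+m3, 0, -M1-m1, g3, 0, -g1],
      [-M2-m2, M1+m1, 0, -g2, g1, 0],
      [0, -g3, g2, 0, 0, 0],
      [g3, 0, -g1, 0, 0, 0],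
      [-g2, g1, 0, 0, 0, 0]] ! i ! j"

lemma PiMat_eq_pi_table:
  "PiMat mu1 mu2 mu3 x i j = pi_table (coord 0 x) (coord 1 x) (coord 2 x)
     (coord 3 x) (coord 4 x) (coord 5 x) (mu1 x) (mu2 x) (mu3 x) i j"
  by (simp add: PiMat_def pi_table_def Let_def)

lemma pi_table_skew:
  "i < 6 \<Longrightarrow> j < 6 \<Longrightarrow> pi_table M1 M2 M3 g1 g2 g3 m1 m2 m3 i j = - pi_table M1 M2 M3 g1 g2 g3 m1 m2 m3 j i"
  by (drule less_6_cases, drule less_6_cases) (auto simp: pi_table_def)

lemma pi_table_differentiable:
  assumes "k < 6" "l < 6"
    and "f1 differentiable (at x)" "f2 differentiable (at x)" "f3 differentiable (at x)"
      "f4 differentiable (at x)" "f5 differentiable (at x)" "f6 differentiable (at x)"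
      "f7 differentiable (at x)" "f8 differentiable (at x)" "f9 differentiable (at x)"
  shows "(\<lambda>y. pi_table (f1 y) (f2 y) (f3 y) (f4 y) (f5 y) (f6 y) (f7 y) (f8 y) (f9 y) k l)
    differentiable (at x)"
  using less_6_cases[OF assms(1)] less_6_cases[OF assms(2)]
  by (elim disjE) (simp_all add: pi_table_def assms(3-))

lemma partial_pi_table:
  assumes "k < 6" "l < 6"
    and d: "f1 differentiable (at x)" "f2 differentiable (at x)" "f3 differentiable (at x)"
      "f4 differentiable (at x)" "f5 differentiable (at x)" "f6 differentiable (at x)"
      "f7 differentiable (at x)" "f8 differentiable (at x)" "f9 differentiable (at x)"
  shows "partial j (\<lambda>y. pi_table (f1 y) (f2 y) (f3 y) (f4 y) (f5 y) (f6 y) (f7 y) (f8 y) (f9 y) k l) x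
       = pi_table (partial j f1 x) (partial j f2 x) (partial j f3 x) (partial j f4 x) (partial j f5 x)
              (partial j f6 x) (partial j f7 x) (partial j f8 x) (partial j f9 x) k l"
  using less_6_cases[OF assms(1)] less_6_cases[OF assms(2)]
  by (elim disjE) (simp_all add: pi_table_def partial_const partial_add partial_minus partial_diff d)

text \<open>The partial derivatives of \<open>\<Pi>\<^sub>\<mu>\<close> when \<open>\<mu>\<close> depends on \<open>\<gamma>\<close> only, with Jacobian matrix
  \<open>D a b = \<partial>\<mu>\<^sub>a/\<partial>\<gamma>\<^sub>b\<close> (indices from 0).\<close>

definition kron :: "nat \<Rightarrow> nat \<Rightarrow> real" where
  "kron a j = (if a = j then 1 else 0)"

definition mu_partial :: "(nat \<Rightarrow> nat \<Rightarrow> real) \<Rightarrow> nat \<Rightarrow> nat \<Rightarrow> real" where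
  "mu_partial D a j = (if j = 3 then D a 0 else if j = 4 then D a 1 else if j = 5 then D a 2 else 0)"

definition pi_table_partial :: "(nat \<Rightarrow> nat \<Rightarrow> real) \<Rightarrow> nat \<Rightarrow> nat \<Rightarrow> nat \<Rightarrow> real" where
  "pi_table_partial D j k l = pi_table (kron 0 j) (kron 1 j) (kron 2 j) (kron 3 j) (kron 4 j) (kron 5 j)
     (mu_partial D 0 j) (mu_partial D 1 j) (mu_partial D 2 j) k l"

lemma schouten_pi_table_eq_0:
  assumes curl: "g1 * (D 2 1 - D 1 2) + g2 * (D 0 2 - D 2 0) + g3 * (D 1 0 - D 0 1) = 0"
    and "i < 6" "k < 6" "l < 6"
  shows "(\<Sum>j<6. pi_table M1 M2 M3 g1 g2 g3 m1 m2 m3 i j * pi_table_partial D j k l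
              + pi_table M1 M2 M3 g1 g2 g3 m1 m2 m3 k j * pi_table_partial D j l i
              + pi_table M1 M2 M3 g1 g2 g3 m1 m2 m3 l j * pi_table_partial D j i k) = 0"
  using less_6_cases[OF assms(2)] less_6_cases[OF assms(3)] less_6_cases[OF assms(4)]
  unfolding sum_lessThan_6
  by (elim disjE) (simp_all add: pi_table_def pi_table_partial_def kron_def mu_partial_def,
      (use curl in \<open>simp_all add: algebra_simps\<close>))

lemma partial_eq_mu_partial:
  assumes "(mu has_derivative (\<lambda>h. D a 0 * coord 3 h + D a 1 * coord 4 h + D a 2 * coord 5 h)) (at x)"
    and "j < 6"
  shows "partial j mu x = mu_partial D a j"
  using less_6_cases[OF assms(2)]
  by (elim disjE) (simp_all add: partial_eq_derivative[OF assms(1)] coord_basis6 mu_partial_def)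

lemma PiMat_entry_differentiable:
  assumes "mu1 differentiable (at x)" "mu2 differentiable (at x)" "mu3 differentiable (at x)"
    and "k < 6" "l < 6"
  shows "(\<lambda>y. PiMat mu1 mu2 mu3 y k l) differentiable (at x)"
  unfolding PiMat_eq_pi_table
  by (rule pi_table_differentiable) (use assms in \<open>auto intro: differentiableI[OF coord_has_derivative]\<close>)

lemma partial_PiMat:
  assumes mu1: "(mu1 has_derivative (\<lambda>h. D 0 0 * coord 3 h + D 0 1 * coord 4 h + D 0 2 * coord 5 h)) (at x)"
    and mu2: "(mu2 has_derivative (\<lambda>h. D 1 0 * coord 3 h + D 1 1 * coord 4 h + D 1 2 * coord 5 h)) (at x)"
    and mu3: "(mu3 has_derivative (\<lambda>h. D 2 0 * coord 3 h + D 2 1 * coord 4 h + D 2 2 * coord 5 h)) (at x)"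
    and "j < 6" "k < 6" "l < 6"
  shows "partial j (\<lambda>y. PiMat mu1 mu2 mu3 y k l) x = pi_table_partial D j k l"
proof -
  have "partial j (\<lambda>y. PiMat mu1 mu2 mu3 y k l) x =
      pi_table (partial j (coord 0) x) (partial j (coord 1) x) (partial j (coord 2) x)
        (partial j (coord 3) x) (partial j (coord 4) x) (partial j (coord 5) x)
        (partial j mu1 x) (partial j mu2 x) (partial j mu3 x) k l"
    unfolding PiMat_eq_pi_table using assms(5,6) mu1 mu2 mu3
    by (intro partial_pi_table) (auto intro: differentiableI[OF coord_has_derivative] differentiableI)
  then show ?thesis
    using assms(4) partial_coord[of _ j x]
    by (simp add: pi_table_partial_def kron_def
        partial_eq_mu_partial[where D=D and a=0, OF mu1] partial_eq_mu_partial[where D=D and a=1, OF mu2]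
        partial_eq_mu_partial[where D=D and a=2, OF mu3])
qed

section \<open>Poisson brackets and Casimir functions of \<open>\<Pi>\<^sub>\<mu>\<close>\<close>

lemma bracket_eq_sum:
  "bracket mu1 mu2 mu3 f g x =
     (\<Sum>i\<in>{..<6}. \<Sum>j\<in>{..<6}. partial i f x * PiMat mu1 mu2 mu3 x i j * partial j g x)"
  by (simp add: bracket_def grad6_def)

lemma partial_bracket:
  assumes U: "open U" and g: "smooth_on6 U g" and h: "smooth_on6 U h" and x: "x \<in> U" and j: "j < 6"
    and mu: "mu1 differentiable (at x)" "mu2 differentiable (at x)" "mu3 differentiable (at x)"
  shows "partial j (bracket mu1 mu2 mu3 g h) x =
    (\<Sum>k\<in>{..<6}. \<Sum>l\<in>{..<6}. partial j (partial k g) x * PiMat mu1 mu2 mu3 x k l * partial l h x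
       + partial k g x * partial j (\<lambda>y. PiMat mu1 mu2 mu3 y k l) x * partial l h x
       + partial k g x * PiMat mu1 mu2 mu3 x k l * partial j (partial l h) x)"
proof -
  have dg: "partial k g differentiable (at x)" and dh: "partial k h differentiable (at x)"
    if "k < 6" for k
    using smooth_on6_imp_differentiable[OF U smooth_on6_partial x] g h that by blast+
  have dP: "(\<lambda>y. PiMat mu1 mu2 mu3 y k l) differentiable (at x)" if "k < 6" "l < 6" for k l
    using PiMat_entry_differentiable[OF mu that] .
  have dprod: "(\<lambda>y. partial k g y * PiMat mu1 mu2 mu3 y k l * partial l h y) differentiable (at x)"
    if "k < 6" "l < 6" for k l
    using dg dh dP that by (intro differentiable_mult) auto
  have "partial j (bracket mu1 mu2 mu3 g h) x = (\<Sum>k\<in>{..<6}.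
      partial j (\<lambda>y. \<Sum>l\<in>{..<6}. partial k g y * PiMat mu1 mu2 mu3 y k l * partial l h y) x)"
    unfolding bracket_eq_sum[abs_def] by (rule partial_sum) (use dprod in auto)
  also have "\<dots> = (\<Sum>k\<in>{..<6}. \<Sum>l\<in>{..<6}.
      partial j (\<lambda>y. partial k g y * PiMat mu1 mu2 mu3 y k l * partial l h y) x)"
    by (intro sum.cong refl partial_sum) (use dprod in auto)
  also have "\<dots> = (\<Sum>k\<in>{..<6}. \<Sum>l\<in>{..<6}.
      partial j (partial k g) x * PiMat mu1 mu2 mu3 x k l * partial l h x
       + partial k g x * partial j (\<lambda>y. PiMat mu1 mu2 mu3 y k l) x * partial l h x
       + partial k g x * PiMat mu1 mu2 mu3 x k l * partial j (partial l h) x)"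
    using dg dh dP by (intro sum.cong refl) (simp add: partial_mult algebra_simps)
  finally show ?thesis .
qed

lemma bracket_bracket_eq_nested_bracket_sum:
  assumes U: "open U" and "smooth_on6 U g" "smooth_on6 U h" "x \<in> U"
    and "mu1 differentiable (at x)" "mu2 differentiable (at x)" "mu3 differentiable (at x)"
  shows "bracket mu1 mu2 mu3 f (bracket mu1 mu2 mu3 g h) x =
    nested_bracket_sum {..<6} (PiMat mu1 mu2 mu3 x) (\<lambda>j k l. partial j (\<lambda>y. PiMat mu1 mu2 mu3 y k l) x)
      (\<lambda>i. partial i f x) (\<lambda>i. partial i g x) (\<lambda>i. partial i h x)
      (\<lambda>j k. partial j (partial k g) x) (\<lambda>j k. partial j (partial k h) x)"
  unfolding bracket_eq_sum[of _ _ _ f] nested_bracket_sum_def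
  using partial_bracket[OF assms(1-4) _ assms(5-7)] by (intro sum.cong refl) simp

theorem defines_poisson_on_if_curl_orthogonal:
  fixes D :: "real^6 \<Rightarrow> nat \<Rightarrow> nat \<Rightarrow> real"
  assumes U: "open U"
    and mu1: "\<And>x. x \<in> U \<Longrightarrow>
      (mu1 has_derivative (\<lambda>h. D x 0 0 * coord 3 h + D x 0 1 * coord 4 h + D x 0 2 * coord 5 h)) (at x)"
    and mu2: "\<And>x. x \<in> U \<Longrightarrow>
      (mu2 has_derivative (\<lambda>h. D x 1 0 * coord 3 h + D x 1 1 * coord 4 h + D x 1 2 * coord 5 h)) (at x)"
    and mu3: "\<And>x. x \<in> U \<Longrightarrow>
      (mu3 has_derivative (\<lambda>h. D x 2 0 * coord 3 h + D x 2 1 * coord 4 h + D x 2 2 * coord 5 h)) (at x)"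
    and curl: "\<And>x. x \<in> U \<Longrightarrow> coord 3 x * (D x 2 1 - D x 1 2) + coord 4 x * (D x 0 2 - D x 2 0)
      + coord 5 x * (D x 1 0 - D x 0 1) = 0"
  shows "defines_poisson_on U mu1 mu2 mu3"
  unfolding defines_poisson_on_def
proof (intro allI impI ballI)
  fix f g h x
  assume "smooth_on6 U f \<and> smooth_on6 U g \<and> smooth_on6 U h" and x: "x \<in> U"
  then have f: "smooth_on6 U f" and g: "smooth_on6 U g" and h: "smooth_on6 U h" by auto
  have diff: "mu1 differentiable (at x)" "mu2 differentiable (at x)" "mu3 differentiable (at x)"
    using mu1[OF x] mu2[OF x] mu3[OF x] by (auto intro: differentiableI)
  have partial_P: "partial j (\<lambda>y. PiMat mu1 mu2 mu3 y k l) x = pi_table_partial (D x) j k l"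
    if "j < 6" "k < 6" "l < 6" for j k l
    using partial_PiMat[OF mu1[OF x] mu2[OF x] mu3[OF x] that] .
  show "bracket mu1 mu2 mu3 f (bracket mu1 mu2 mu3 g h) x + bracket mu1 mu2 mu3 g (bracket mu1 mu2 mu3 h f) x
      + bracket mu1 mu2 mu3 h (bracket mu1 mu2 mu3 f g) x = 0"
    unfolding bracket_bracket_eq_nested_bracket_sum[OF U g h x diff]
      bracket_bracket_eq_nested_bracket_sum[OF U h f x diff]
      bracket_bracket_eq_nested_bracket_sum[OF U f g x diff]
  proof (rule jacobi_cyclic_sum_eq_0)
    show "PiMat mu1 mu2 mu3 x i j = - PiMat mu1 mu2 mu3 x j i" if "i \<in> {..<6}" "j \<in> {..<6}" for i j
      using that unfolding PiMat_eq_pi_table by (intro pi_table_skew) auto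
    show "partial i (partial j f) x = partial j (partial i f) x"
      "partial i (partial j g) x = partial j (partial i g) x"
      "partial i (partial j h) x = partial j (partial i h) x"
      if "i \<in> {..<6}" "j \<in> {..<6}" for i j
      using that f g h partial_partial_commute[OF U _ x] by auto
    show "(\<Sum>j\<in>{..<6}. PiMat mu1 mu2 mu3 x i j * partial j (\<lambda>y. PiMat mu1 mu2 mu3 y k l) x
        + PiMat mu1 mu2 mu3 x k j * partial j (\<lambda>y. PiMat mu1 mu2 mu3 y l i) x
        + PiMat mu1 mu2 mu3 x l j * partial j (\<lambda>y. PiMat mu1 mu2 mu3 y i k) x) = 0"
      if "i \<in> {..<6}" "k \<in> {..<6}" "l \<in> {..<6}" for i k l
      using that partial_P curl[OF x]
      by (simp add: PiMat_eq_pi_table schouten_pi_table_eq_0)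
  qed
qed

theorem is_casimir_on_if_gradient:
  assumes "smooth_on6 U C"
    and "\<And>x. x \<in> U \<Longrightarrow> (C has_derivative (\<lambda>h.
        coord 3 x * coord 0 h + coord 4 x * coord 1 h + coord 5 x * coord 2 h
      + (coord 0 x + mu1 x + lambda x * coord 3 x) * coord 3 h
      + (coord 1 x + mu2 x + lambda x * coord 4 x) * coord 4 h
      + (coord 2 x + mu3 x + lambda x * coord 5 x) * coord 5 h)) (at x)"
  shows "is_casimir_on U mu1 mu2 mu3 C"
  unfolding is_casimir_on_def
proof (intro conjI ballI allI impI)
  fix x i assume x: "x \<in> U" and i: "(i::nat) < 6"
  show "(\<Sum>j<6. PiMat mu1 mu2 mu3 x i j * grad6 C x j) = 0"
    using less_6_cases[OF i]
    unfolding grad6_def partial_eq_derivative[OF assms(2)[OF x]] sum_lessThan_6 PiMat_eq_pi_table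
    by (elim disjE) (simp_all add: pi_table_def coord_basis6 algebra_simps)
qed (rule assms(1))

section \<open>Elementary smooth functions on \<open>\<real>\<^sup>3 \<times> D\<close>\<close>

lemma open_domR3D: "open domR3D"
  unfolding domR3D_def coord_def by (intro open_Collect_less continuous_intros)

lemma domR3D_pos: "x \<in> domR3D \<Longrightarrow> (coord 3 x)\<^sup>2 + (coord 4 x)\<^sup>2 > 0"
  by (simp add: domR3D_def)

definition inv_rho :: "real^6 \<Rightarrow> real" where
  "inv_rho x = 1 / sqrt ((coord 3 x)\<^sup>2 + (coord 4 x)\<^sup>2)"

definition inv_norm_sq :: "real^6 \<Rightarrow> real" where
  "inv_norm_sq x = 1 / ((coord 3 x)\<^sup>2 + (coord 4 x)\<^sup>2 + (coord 5 x)\<^sup>2)"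

definition latitude :: "real^6 \<Rightarrow> real" where
  "latitude x = arctan (coord 5 x * inv_rho x)"

lemma inv_rho_sq:
  assumes "x \<in> domR3D"
  shows "inv_rho x ^ 2 * ((coord 3 x)\<^sup>2 + (coord 4 x)\<^sup>2) = 1"
proof -
  define s where "s = (coord 3 x)\<^sup>2 + (coord 4 x)\<^sup>2"
  have "s > 0" using domR3D_pos[OF assms] by (simp add: s_def)
  moreover have "inv_rho x = 1 / sqrt s" by (simp add: inv_rho_def s_def)
  ultimately show ?thesis by (simp add: power_divide s_def[symmetric])
qed

lemma inv_norm_sq_mult:
  assumes "x \<in> domR3D"
  shows "inv_norm_sq x * ((coord 3 x)\<^sup>2 + (coord 4 x)\<^sup>2 + (coord 5 x)\<^sup>2) = 1"
proof -
  have "(coord 3 x)\<^sup>2 + (coord 4 x)\<^sup>2 + (coord 5 x)\<^sup>2 > 0"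
    using domR3D_pos[OF assms] by (simp add: add_pos_nonneg)
  then show ?thesis by (simp add: inv_norm_sq_def)
qed

lemma inv_rho_has_derivative:
  assumes "x \<in> domR3D"
  shows "(inv_rho has_derivative
    (\<lambda>h. - (coord 3 x * coord 3 h + coord 4 x * coord 4 h) * inv_rho x ^ 3)) (at x)"
proof -
  define S where "S = sqrt ((coord 3 x)\<^sup>2 + (coord 4 x)\<^sup>2)"
  have pos: "(coord 3 x)\<^sup>2 + (coord 4 x)\<^sup>2 > 0" and S: "S > 0"
    using domR3D_pos[OF assms] by (simp_all add: S_def)
  show ?thesis
    unfolding inv_rho_def[abs_def] S_def[symmetric]
    apply (intro derivative_eq_intros)
    apply (rule refl)
    using pos apply simp
    apply (rule refl)+
    using S S_def apply force
    apply (rule ext)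
    apply (simp only: S_def[symmetric])
    using S by (simp add: field_simps power3_eq_cube)
qed

lemma inv_norm_sq_has_derivative:
  assumes "x \<in> domR3D"
  shows "(inv_norm_sq has_derivative (\<lambda>h.
    - 2 * (coord 3 x * coord 3 h + coord 4 x * coord 4 h + coord 5 x * coord 5 h) * inv_norm_sq x ^ 2)) (at x)"
proof -
  define R where "R = (coord 3 x)\<^sup>2 + (coord 4 x)\<^sup>2 + (coord 5 x)\<^sup>2"
  have R: "R > 0" using domR3D_pos[OF assms] by (simp add: R_def add_pos_nonneg)
  show ?thesis
    unfolding inv_norm_sq_def[abs_def] R_def[symmetric]
    apply (intro derivative_eq_intros)
    apply (rule refl)+
    using R R_def apply force
    apply (rule ext)
    apply (simp only: R_def[symmetric])
    using R by (simp add: field_simps power2_eq_square)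
qed

lemma latitude_has_derivative:
  assumes x: "x \<in> domR3D"
  shows "(latitude has_derivative (\<lambda>h. inv_norm_sq x * inv_rho x *
    (coord 5 h * ((coord 3 x)\<^sup>2 + (coord 4 x)\<^sup>2) - coord 5 x * (coord 3 x * coord 3 h + coord 4 x * coord 4 h)))) (at x)"
proof -
  have r: "inv_rho x ^ 2 * ((coord 3 x)\<^sup>2 + (coord 4 x)\<^sup>2) = 1"
    and q: "inv_norm_sq x * ((coord 3 x)\<^sup>2 + (coord 4 x)\<^sup>2 + (coord 5 x)\<^sup>2) = 1"
    using inv_rho_sq[OF x] inv_norm_sq_mult[OF x] .
  have "(1 + (coord 5 x * inv_rho x)\<^sup>2) * (((coord 3 x)\<^sup>2 + (coord 4 x)\<^sup>2) * inv_norm_sq x) = 1"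
    using r q by algebra
  then have inv: "inverse (1 + (coord 5 x * inv_rho x)\<^sup>2) = ((coord 3 x)\<^sup>2 + (coord 4 x)\<^sup>2) * inv_norm_sq x"
    by (rule inverse_unique)
  show ?thesis
    unfolding latitude_def[abs_def]
    apply (intro derivative_eq_intros)
    apply (rule refl)
    apply (rule inv_rho_has_derivative[OF x])
    apply (rule refl)
    apply (rule ext)
    apply (simp only: inv)
    using r by algebra
qed

inductive elementary :: "(real^6 \<Rightarrow> real) \<Rightarrow> bool" where
  elementary_const: "elementary (\<lambda>x. a)"
| elementary_coord: "j < 6 \<Longrightarrow> elementary (\<lambda>x. coord j x)"
| elementary_inv_rho: "elementary inv_rho"
| elementary_inv_norm_sq: "elementary inv_norm_sq"
| elementary_latitude: "elementary latitude"
| elementary_add: "elementary f \<Longrightarrow> elementary g \<Longrightarrow> elementary (\<lambda>x. f x + g x)"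
| elementary_mult: "elementary f \<Longrightarrow> elementary g \<Longrightarrow> elementary (\<lambda>x. f x * g x)"

lemma elementary_minus: "elementary f \<Longrightarrow> elementary (\<lambda>x. - f x)"
  using elementary_mult[OF elementary_const[of "-1"]] by simp

lemma elementary_diff: "elementary f \<Longrightarrow> elementary g \<Longrightarrow> elementary (\<lambda>x. f x - g x)"
  using elementary_add[OF _ elementary_minus] by simp

lemma elementary_power: "elementary f \<Longrightarrow> elementary (\<lambda>x. f x ^ n)"
  by (induction n) (auto intro: elementary_const elementary_mult)

lemmas elementary_intros = elementary.intros elementary_minus elementary_diff elementary_power

lemma elementary_partial_elementary:
  assumes "elementary f"
  shows "(\<forall>x\<in>domR3D. f differentiable (at x)) \<and>
         (\<forall>k<6. \<exists>g. elementary g \<and> (\<forall>x\<in>domR3D. partial k f x = g x))"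
  using assms
proof (induction rule: elementary.induct)
  case (elementary_const a)
  then show ?case by (auto simp: partial_const intro!: exI[of _ "\<lambda>x. 0"] elementary.intros)
next
  case (elementary_coord j)
  show ?case
    using partial_coord[OF elementary_coord]
    by (auto intro!: exI[of _ "\<lambda>x. if j = _ then 1 else 0"] elementary.intros
        differentiableI[OF coord_has_derivative])
next
  case elementary_inv_rho
  show ?case
    using inv_rho_has_derivative partial_eq_derivative[OF inv_rho_has_derivative]
    by (auto intro: differentiableI
        intro!: exI[of _ "\<lambda>x. - (coord 3 x * coord 3 (basis6 _) + coord 4 x * coord 4 (basis6 _))
          * inv_rho x ^ 3"] elementary_intros)
next
  case elementary_inv_norm_sq
  show ?case
    using inv_norm_sq_has_derivative partial_eq_derivative[OF inv_norm_sq_has_derivative]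
    by (auto intro: differentiableI
        intro!: exI[of _ "\<lambda>x. - 2 * (coord 3 x * coord 3 (basis6 _) + coord 4 x * coord 4 (basis6 _)
          + coord 5 x * coord 5 (basis6 _)) * inv_norm_sq x ^ 2"] elementary_intros)
next
  case elementary_latitude
  show ?case
    using latitude_has_derivative partial_eq_derivative[OF latitude_has_derivative]
    by (auto intro: differentiableI
        intro!: exI[of _ "\<lambda>x. inv_norm_sq x * inv_rho x * (coord 5 (basis6 _) * ((coord 3 x)\<^sup>2 + (coord 4 x)\<^sup>2)
          - coord 5 x * (coord 3 x * coord 3 (basis6 _) + coord 4 x * coord 4 (basis6 _)))"] elementary_intros)
next
  case (elementary_add f g)
  show ?case
  proof (intro conjI allI impI)
    fix k :: nat assume "k < 6"
    then obtain F G where "elementary F" "\<forall>x\<in>domR3D. partial k f x = F x"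
      and "elementary G" "\<forall>x\<in>domR3D. partial k g x = G x" using elementary_add.IH by blast
    then show "\<exists>h. elementary h \<and> (\<forall>x\<in>domR3D. partial k (\<lambda>x. f x + g x) x = h x)"
      using elementary_add.IH
      by (intro exI[of _ "\<lambda>x. F x + G x"]) (auto intro!: elementary_intros simp: partial_add)
  qed (use elementary_add.IH in auto)
next
  case (elementary_mult f g)
  show ?case
  proof (intro conjI allI impI)
    fix k :: nat assume "k < 6"
    then obtain F G where "elementary F" "\<forall>x\<in>domR3D. partial k f x = F x"
      and "elementary G" "\<forall>x\<in>domR3D. partial k g x = G x" using elementary_mult.IH by blast
    then show "\<exists>h. elementary h \<and> (\<forall>x\<in>domR3D. partial k (\<lambda>x. f x * g x) x = h x)"
      using elementary_mult.IH elementary_mult.hyps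
      by (intro exI[of _ "\<lambda>x. f x * G x + F x * g x"]) (auto intro!: elementary_intros simp: partial_mult)
  qed (use elementary_mult.IH in auto)
qed

lemma iter_partial_elementary:
  assumes "\<forall>k\<in>set ks. k < 6" "elementary f"
  shows "\<exists>g. elementary g \<and> (\<forall>x\<in>domR3D. iter_partial ks f x = g x)"
  using assms
proof (induction ks)
  case Nil
  then show ?case by auto
next
  case (Cons k ks)
  then obtain g where g: "elementary g" "\<forall>x\<in>domR3D. iter_partial ks f x = g x" by auto
  moreover obtain h where "elementary h" "\<forall>x\<in>domR3D. partial k g x = h x"
    using elementary_partial_elementary[OF g(1)] Cons.prems(1) by auto
  ultimately show ?case
    using partial_cong_open[OF open_domR3D _ g(2)[rule_format]] by auto
qed

lemma smooth_on6_if_elementary: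
  assumes "elementary f"
  shows "smooth_on6 domR3D f"
  unfolding smooth_on6_def
proof (intro allI impI)
  fix ks :: "nat list" assume "\<forall>k\<in>set ks. k < 6"
  then obtain g where g: "elementary g" "\<forall>x\<in>domR3D. iter_partial ks f x = g x"
    using iter_partial_elementary assms by blast
  have "iter_partial ks f differentiable (at x)" if x: "x \<in> domR3D" for x
  proof -
    obtain g' where "(g has_derivative g') (at x)"
      using elementary_partial_elementary[OF g(1)] x unfolding differentiable_def by blast
    then have "(iter_partial ks f has_derivative g') (at x)"
      by (rule has_derivative_transform_within_open[OF _ open_domR3D x]) (use g in auto)
    then show ?thesis by (rule differentiableI)
  qed
  then show "iter_partial ks f differentiable_on domR3D"
    by (simp add: differentiable_on_eq_differentiable_at[OF open_domR3D])
qed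

section \<open>The vector field \<open>\<mu>\<close> and its Casimir function\<close>

definition mu1_fn :: "real \<Rightarrow> real \<Rightarrow> real \<Rightarrow> real \<Rightarrow> real \<Rightarrow> real^6 \<Rightarrow> real" where
  "mu1_fn c N n n1 n2 x = c * (- n * coord 3 x - n1 * (coord 3 x)\<^sup>2 + 2 * n1 * (coord 4 x)\<^sup>2
     + n1 * (coord 5 x)\<^sup>2 - 3 * n2 * coord 3 x * coord 4 x + N * coord 3 x * inv_rho x ^ 3)"

definition mu2_fn :: "real \<Rightarrow> real \<Rightarrow> real \<Rightarrow> real \<Rightarrow> real \<Rightarrow> real^6 \<Rightarrow> real" where
  "mu2_fn c N n n1 n2 x = c * (- n * coord 4 x + 2 * n2 * (coord 3 x)\<^sup>2 - n2 * (coord 4 x)\<^sup>2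
     + n2 * (coord 5 x)\<^sup>2 - 3 * n1 * coord 3 x * coord 4 x + N * coord 4 x * inv_rho x ^ 3)"

definition mu3_fn :: "real \<Rightarrow> real \<Rightarrow> real \<Rightarrow> real \<Rightarrow> real \<Rightarrow> real^6 \<Rightarrow> real" where
  "mu3_fn c N n n1 n2 x = - c * coord 5 x * (3 * n + 5 * n1 * coord 3 x + 5 * n2 * coord 4 x
     + N * coord 5 x * inv_rho x)"

definition jacobian_mu :: "real \<Rightarrow> real \<Rightarrow> real \<Rightarrow> real \<Rightarrow> real \<Rightarrow> real^6 \<Rightarrow> nat \<Rightarrow> nat \<Rightarrow> real" where
  "jacobian_mu c N n n1 n2 x a b = (let g1 = coord 3 x; g2 = coord 4 x; g3 = coord 5 x; r = inv_rho x in
     if a = 0 then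
       (if b = 0 then c * (- n - 2 * n1 * g1 - 3 * n2 * g2 + N * (r^3 - 3 * g1^2 * r^5))
        else if b = 1 then c * (4 * n1 * g2 - 3 * n2 * g1 - 3 * N * g1 * g2 * r^5)
        else c * (2 * n1 * g3))
     else if a = 1 then
       (if b = 0 then c * (4 * n2 * g1 - 3 * n1 * g2 - 3 * N * g1 * g2 * r^5)
        else if b = 1 then c * (- n - 2 * n2 * g2 - 3 * n1 * g1 + N * (r^3 - 3 * g2^2 * r^5))
        else c * (2 * n2 * g3))
     else
       (if b = 0 then - c * (5 * n1 * g3 - N * g3^2 * g1 * r^3)
        else if b = 1 then - c * (5 * n2 * g3 - N * g3^2 * g2 * r^3)
        else - c * (3 * n + 5 * n1 * g1 + 5 * n2 * g2 + 2 * N * g3 * r)))"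

lemma curl_jacobian_mu_orthogonal:
  "coord 3 x * (jacobian_mu c N n n1 n2 x 2 1 - jacobian_mu c N n n1 n2 x 1 2)
   + coord 4 x * (jacobian_mu c N n n1 n2 x 0 2 - jacobian_mu c N n n1 n2 x 2 0)
   + coord 5 x * (jacobian_mu c N n n1 n2 x 1 0 - jacobian_mu c N n n1 n2 x 0 1) = 0"
  by (simp add: jacobian_mu_def Let_def algebra_simps)

lemma mu1_fn_has_derivative:
  assumes "x \<in> domR3D"
  shows "(mu1_fn c N n n1 n2 has_derivative (\<lambda>h. jacobian_mu c N n n1 n2 x 0 0 * coord 3 h
    + jacobian_mu c N n n1 n2 x 0 1 * coord 4 h + jacobian_mu c N n n1 n2 x 0 2 * coord 5 h)) (at x)"
  unfolding mu1_fn_def[abs_def]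
  by (rule derivative_eq_intros refl inv_rho_has_derivative[OF assms] | rule ext)+
     (simp add: jacobian_mu_def Let_def, algebra)

lemma mu2_fn_has_derivative:
  assumes "x \<in> domR3D"
  shows "(mu2_fn c N n n1 n2 has_derivative (\<lambda>h. jacobian_mu c N n n1 n2 x 1 0 * coord 3 h
    + jacobian_mu c N n n1 n2 x 1 1 * coord 4 h + jacobian_mu c N n n1 n2 x 1 2 * coord 5 h)) (at x)"
  unfolding mu2_fn_def[abs_def]
  by (rule derivative_eq_intros refl inv_rho_has_derivative[OF assms] | rule ext)+
     (simp add: jacobian_mu_def Let_def, algebra)

lemma mu3_fn_has_derivative:
  assumes "x \<in> domR3D"
  shows "(mu3_fn c N n n1 n2 has_derivative (\<lambda>h. jacobian_mu c N n n1 n2 x 2 0 * coord 3 h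
    + jacobian_mu c N n n1 n2 x 2 1 * coord 4 h + jacobian_mu c N n n1 n2 x 2 2 * coord 5 h)) (at x)"
  unfolding mu3_fn_def[abs_def]
  by (rule derivative_eq_intros refl inv_rho_has_derivative[OF assms] | rule ext)+
     (simp add: jacobian_mu_def Let_def, algebra)

definition casimir_fn :: "real \<Rightarrow> real \<Rightarrow> real \<Rightarrow> real \<Rightarrow> real \<Rightarrow> real^6 \<Rightarrow> real" where
  "casimir_fn c N n n1 n2 x = coord 0 x * coord 3 x + coord 1 x * coord 4 x + coord 2 x * coord 5 x
     + c * (n + n1 * coord 3 x + n2 * coord 4 x) * (2 * (coord 3 x)\<^sup>2 + 2 * (coord 4 x)\<^sup>2 + (coord 5 x)\<^sup>2)
     + 1/2 * c * N * ((coord 5 x * ((coord 3 x)\<^sup>2 + (coord 4 x)\<^sup>2) - 2) * inv_rho x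
       - ((coord 3 x)\<^sup>2 + (coord 4 x)\<^sup>2 + (coord 5 x)\<^sup>2) * latitude x)"

definition casimir_multiplier :: "real \<Rightarrow> real \<Rightarrow> real \<Rightarrow> real \<Rightarrow> real \<Rightarrow> real^6 \<Rightarrow> real" where
  "casimir_multiplier c N n n1 n2 x = c * (5 * n + 7 * n1 * coord 3 x + 7 * n2 * coord 4 x)
     + c * N * (coord 5 x * inv_rho x - latitude x)"

lemma elementary_casimir_fn: "elementary (casimir_fn c N n n1 n2)"
  unfolding casimir_fn_def[abs_def] by (intro elementary_intros) simp_all

lemma casimir_fn_has_derivative:
  fixes c N n n1 n2 :: real
  assumes x: "x \<in> domR3D"
  defines "lam \<equiv> casimir_multiplier c N n n1 n2 x"
  shows "(casimir_fn c N n n1 n2 has_derivative (\<lambda>h.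
        coord 3 x * coord 0 h + coord 4 x * coord 1 h + coord 5 x * coord 2 h
      + (coord 0 x + mu1_fn c N n n1 n2 x + lam * coord 3 x) * coord 3 h
      + (coord 1 x + mu2_fn c N n n1 n2 x + lam * coord 4 x) * coord 4 h
      + (coord 2 x + mu3_fn c N n n1 n2 x + lam * coord 5 x) * coord 5 h)) (at x)"
proof -
  have r: "inv_rho x ^ 2 * ((coord 3 x)\<^sup>2 + (coord 4 x)\<^sup>2) = 1"
    and q: "inv_norm_sq x * ((coord 3 x)\<^sup>2 + (coord 4 x)\<^sup>2 + (coord 5 x)\<^sup>2) = 1"
    using inv_rho_sq[OF x] inv_norm_sq_mult[OF x] .
  show ?thesis
    unfolding casimir_fn_def[abs_def]
    apply (rule derivative_eq_intros refl inv_rho_has_derivative[OF x] latitude_has_derivative[OF x])+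
    apply (rule ext)
    unfolding lam_def casimir_multiplier_def mu1_fn_def mu2_fn_def mu3_fn_def
    apply simp
    using r q by algebra
qed

theorem mainTheorem9:
  fixes c N n n1 n2 :: real
  defines "rho \<equiv> (\<lambda>x. sqrt ((coord 3 x)\<^sup>2 + (coord 4 x)\<^sup>2))"
  defines "mu1 \<equiv> (\<lambda>x. c * (- n * coord 3 x - n1 * (coord 3 x)\<^sup>2 + 2 * n1 * (coord 4 x)\<^sup>2
              + n1 * (coord 5 x)\<^sup>2 - 3 * n2 * coord 3 x * coord 4 x
              + N * coord 3 x / (rho x) ^ 3))"
  defines "mu2 \<equiv> (\<lambda>x. c * (- n * coord 4 x + 2 * n2 * (coord 3 x)\<^sup>2 - n2 * (coord 4 x)\<^sup>2
              + n2 * (coord 5 x)\<^sup>2 - 3 * n1 * coord 3 x * coord 4 x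
              + N * coord 4 x / (rho x) ^ 3))"
  defines "mu3 \<equiv> (\<lambda>x. - c * coord 5 x * (3 * n + 5 * n1 * coord 3 x + 5 * n2 * coord 4 x
              + N * coord 5 x / rho x))"
  defines "C \<equiv> (\<lambda>x. coord 0 x * coord 3 x + coord 1 x * coord 4 x + coord 2 x * coord 5 x
              + c * (n + n1 * coord 3 x + n2 * coord 4 x)
                  * (2 * (coord 3 x)\<^sup>2 + 2 * (coord 4 x)\<^sup>2 + (coord 5 x)\<^sup>2)
              + 1/2 * c * N * ((coord 5 x * (rho x)\<^sup>2 - 2) / rho x
                  - ((coord 3 x)\<^sup>2 + (coord 4 x)\<^sup>2 + (coord 5 x)\<^sup>2)
                    * arctan (coord 5 x / rho x)))"
  shows "defines_poisson_on domR3D mu1 mu2 mu3 \<and> is_casimir_on domR3D mu1 mu2 mu3 C"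
proof -
  have inv_rho_eq: "inv_rho x = 1 / rho x" for x
    by (simp add: rho_def inv_rho_def)
  have "mu1 = mu1_fn c N n n1 n2" "mu2 = mu2_fn c N n n1 n2" "mu3 = mu3_fn c N n n1 n2"
    by (simp_all add: fun_eq_iff mu1_def mu2_def mu3_def mu1_fn_def mu2_fn_def mu3_fn_def
        inv_rho_eq power_one_over)
  moreover have "C = casimir_fn c N n n1 n2"
    by (simp add: fun_eq_iff C_def casimir_fn_def latitude_def inv_rho_eq rho_def)
  moreover have "defines_poisson_on domR3D (mu1_fn c N n n1 n2) (mu2_fn c N n n1 n2) (mu3_fn c N n n1 n2)"
    by (rule defines_poisson_on_if_curl_orthogonal[where D = "jacobian_mu c N n n1 n2", OF open_domR3D
          mu1_fn_has_derivative mu2_fn_has_derivative mu3_fn_has_derivative curl_jacobian_mu_orthogonal])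
  moreover have "is_casimir_on domR3D (mu1_fn c N n n1 n2) (mu2_fn c N n n1 n2) (mu3_fn c N n n1 n2)
      (casimir_fn c N n n1 n2)"
    by (rule is_casimir_on_if_gradient[where lambda = "casimir_multiplier c N n n1 n2",
          OF smooth_on6_if_elementary[OF elementary_casimir_fn] casimir_fn_has_derivative])
  ultimately show ?thesis by simp
qed

end
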